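(* Every $k$-uniform $(D,c,\epsilon)$-structure with $D\ge 1$ is a $(\lambda,p)_k$-structure for $\lambda=c$ and $p=D^{-\epsilon/k}$.
   Context: For a hypergraph $\mathcal{H}$, $\Delta_i(\mathcal{H})$ is the maximum number of edges containing a fixed vertex set of size $i$. For parameters $D,c>0$ and $0<\epsilon\le 1$, a $k$-uniform hypergraph $\mathcal{H}$ is a $(D,c,\epsilon)$-structure if (i) $|\mathcal{E}(\mathcal{H})|\ge D|V(\mathcal{H})|$, (ii) $\Delta_1(\mathcal{H})\le cD$, (iii) $\Delta_2(\mathcal{H})\le cD^{1-\epsilon}$. For $p\in(0,1]$: $w_p(\mathcal{H})=\sum_{E}p^{|E|}$; $\bar w_p(\mathcal{H})=w_p(\mathcal{H})/|V(\mathcal{H})|$; $\Delta_{i,p}(\mathcal{H})=\max_{|L|=i}\sum_{E\supseteq L}p^{|E|}$. A hypergraph is $k$-bounded if all edges have size at most $k$; it is a $(\lambda,p)_k$-structure if it is $k$-bounded with (1) $\bar w_p(\mathcal{H})\ge p$, (2) $\Delta_{1,p}(\mathcal{H})\le\lambda\bar w_p(\mathcal{H})$, (3) $\Delta_{2,p}(\mathcal{H})\le\lambda\bar w_p(\mathcal{H})p^k$. *)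

theory Defs
  imports Complex_Main
begin

definition hypergraph :: "'a set \<Rightarrow> 'a set set \<Rightarrow> bool" where
  "hypergraph V E \<longleftrightarrow> finite V \<and> (\<forall>e\<in>E. e \<subseteq> V)"

definition uniform :: "nat \<Rightarrow> 'a set \<Rightarrow> 'a set set \<Rightarrow> bool" where
  "uniform k V E \<longleftrightarrow> hypergraph V E \<and> (\<forall>e\<in>E. card e = k)"

definition bounded :: "nat \<Rightarrow> 'a set \<Rightarrow> 'a set set \<Rightarrow> bool" where
  "bounded k V E \<longleftrightarrow> hypergraph V E \<and> (\<forall>e\<in>E. card e \<le> k)"

definition Delta :: "nat \<Rightarrow> 'a set \<Rightarrow> 'a set set \<Rightarrow> nat" where
  "Delta i V E = Max (insert 0 {card {e\<in>E. L \<subseteq> e} | L. L \<subseteq> V \<and> card L = i})"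

definition w_p :: "real \<Rightarrow> 'a set \<Rightarrow> 'a set set \<Rightarrow> real" where
  "w_p p V E = (\<Sum>e\<in>E. p ^ card e)"

definition wbar_p :: "real \<Rightarrow> 'a set \<Rightarrow> 'a set set \<Rightarrow> real" where
  "wbar_p p V E = w_p p V E / real (card V)"

definition Delta_p :: "nat \<Rightarrow> real \<Rightarrow> 'a set \<Rightarrow> 'a set set \<Rightarrow> real" where
  "Delta_p i p V E = Max (insert 0 {(\<Sum>e\<in>{e\<in>E. L \<subseteq> e}. p ^ card e) | L. L \<subseteq> V \<and> card L = i})"

definition DCeps_structure :: "nat \<Rightarrow> real \<Rightarrow> real \<Rightarrow> real \<Rightarrow> 'a set \<Rightarrow> 'a set set \<Rightarrow> bool" where
  "DCeps_structure k D c \<epsilon> V E \<longleftrightarrow> uniform k V E \<and>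
     real (card E) \<ge> D * real (card V) \<and>
     real (Delta 1 V E) \<le> c * D \<and>
     real (Delta 2 V E) \<le> c * D powr (1 - \<epsilon>)"

definition lambda_p_structure :: "nat \<Rightarrow> real \<Rightarrow> real \<Rightarrow> 'a set \<Rightarrow> 'a set set \<Rightarrow> bool" where
  "lambda_p_structure k lam p V E \<longleftrightarrow> bounded k V E \<and>
     wbar_p p V E \<ge> p \<and>
     Delta_p 1 p V E \<le> lam * wbar_p p V E \<and>
     Delta_p 2 p V E \<le> lam * wbar_p p V E * p ^ k"

end

theory Submission
  imports Defs
begin

text \<open>In a \<open>k\<close>-uniform hypergraph every edge has weight \<open>q = p ^ k\<close>, so the weighted
  degrees are the unweighted ones scaled by \<open>q\<close> and \<open>wbar_p \<ge> D q\<close>. For \<open>p = D powr (-\<epsilon>/k)\<close>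
  we get \<open>q \<ge> D powr -\<epsilon>\<close> (equality unless \<open>k = 0\<close>), hence
  \<open>wbar_p \<ge> D q \<ge> D powr (1 - \<epsilon>) \<ge> 1 \<ge> p\<close>, \<open>\<Delta>\<^sub>1\<^sub>,\<^sub>p \<le> c D q \<le> c wbar_p\<close> and
  \<open>\<Delta>\<^sub>2\<^sub>,\<^sub>p \<le> c D powr (1 - \<epsilon>) q \<le> c D q q \<le> c wbar_p q\<close>.\<close>

lemma bounded_if_uniform: "uniform k V E \<Longrightarrow> bounded k V E"
  by (simp add: uniform_def bounded_def)

lemma w_p_uniform:
  assumes "uniform k V E"
  shows "w_p p V E = real (card E) * p ^ k"
  using assms by (simp add: w_p_def uniform_def)

lemma wbar_p_uniform_ge:
  assumes "uniform k V E" and "V \<noteq> {}" and "0 \<le> p"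
    and "real (card E) \<ge> D * real (card V)"
  shows "D * p ^ k \<le> wbar_p p V E"
proof -
  have "card V > 0"
    using assms(1,2) by (simp add: uniform_def hypergraph_def card_gt_0_iff)
  moreover have "D * real (card V) * p ^ k \<le> real (card E) * p ^ k"
    using assms(3,4) by (intro mult_right_mono) auto
  ultimately show ?thesis
    using assms(1) by (simp add: wbar_p_def w_p_uniform field_simps)
qed

lemma Delta_p_uniform_le:
  assumes U: "uniform k V E" and "0 \<le> p"
  shows "Delta_p i p V E \<le> real (Delta i V E) * p ^ k"
proof -
  have "finite V" using U by (simp add: uniform_def hypergraph_def)
  let ?S = "{card {e\<in>E. L \<subseteq> e} | L. L \<subseteq> V \<and> card L = i}"
  let ?T = "{(\<Sum>e\<in>{e\<in>E. L \<subseteq> e}. p ^ card e) | L. L \<subseteq> V \<and> card L = i}"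
  have fin: "finite ?S" "finite ?T"
    using \<open>finite V\<close> by (auto intro: finite_subset[OF _ finite_imageI[OF finite_Pow_iff[THEN iffD2]]])
  have "(\<Sum>e\<in>{e\<in>E. L \<subseteq> e}. p ^ card e) \<le> real (Delta i V E) * p ^ k"
    if L: "L \<subseteq> V" "card L = i" for L
  proof -
    have "(\<Sum>e\<in>{e\<in>E. L \<subseteq> e}. p ^ card e) = (\<Sum>e\<in>{e\<in>E. L \<subseteq> e}. p ^ k)"
      using U by (intro sum.cong) (auto simp: uniform_def)
    also have "\<dots> = real (card {e\<in>E. L \<subseteq> e}) * p ^ k"
      by simp
    also have "card {e\<in>E. L \<subseteq> e} \<le> Delta i V E"
      unfolding Delta_def using fin(1) L by (intro Max_ge) auto
    then have "real (card {e\<in>E. L \<subseteq> e}) * p ^ k \<le> real (Delta i V E) * p ^ k"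
      using \<open>0 \<le> p\<close> by (intro mult_right_mono) auto
    finally show ?thesis .
  qed
  then show ?thesis
    unfolding Delta_p_def using fin(2) \<open>0 \<le> p\<close> by (intro Max.boundedI) auto
qed

lemma powr_le_one_if_nonpos:
  fixes D a :: real
  assumes "1 \<le> D" and "a \<le> 0"
  shows "D powr a \<le> 1"
  using powr_mono[OF assms(2,1)] assms(1) by simp

lemma powr_neg_le_power_powr_div:
  fixes D \<epsilon> :: real
  assumes "1 \<le> D" and "0 \<le> \<epsilon>"
  shows "D powr (- \<epsilon>) \<le> (D powr (- \<epsilon> / real k)) ^ k"
proof (cases "k = 0")
  case True
  then show ?thesis using assms by (simp add: powr_le_one_if_nonpos)
next
  case False
  then show ?thesis using assms by (simp add: powr_power)
qed

lemma powr_one_minus_le_power_powr_div: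
  fixes D \<epsilon> :: real
  assumes "1 \<le> D" and "0 \<le> \<epsilon>"
  shows "D powr (1 - \<epsilon>) \<le> D * (D powr (- \<epsilon> / real k)) ^ k"
proof -
  have "D powr (1 - \<epsilon>) = D * D powr (- \<epsilon>)"
    using assms(1) by (simp add: powr_diff powr_minus divide_inverse)
  then show ?thesis
    using assms powr_neg_le_power_powr_div by (simp add: mult_left_mono)
qed

theorem lemma3p4:
  fixes V :: "'a set" and E :: "'a set set" and k :: nat and D c \<epsilon> :: real
  assumes "V \<noteq> {}"
    and "D \<ge> 1" and "c > 0" and "0 < \<epsilon>" and "\<epsilon> \<le> 1"
    and "DCeps_structure k D c \<epsilon> V E"
  shows "lambda_p_structure k c (D powr (- \<epsilon> / real k)) V E"
proof -
  define p where "p = D powr (- \<epsilon> / real k)"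
  have U: "uniform k V E" and density: "real (card E) \<ge> D * real (card V)"
    and Delta1: "real (Delta 1 V E) \<le> c * D"
    and Delta2: "real (Delta 2 V E) \<le> c * D powr (1 - \<epsilon>)"
    using assms(6) by (auto simp: DCeps_structure_def)
  have "0 < p" "p \<le> 1"
    using assms(2,4) by (auto simp: p_def intro!: powr_le_one_if_nonpos divide_nonpos_nonneg)
  have Dq: "D powr (1 - \<epsilon>) \<le> D * p ^ k"
    unfolding p_def using assms(2,4) by (intro powr_one_minus_le_power_powr_div) auto
  have wbar: "D * p ^ k \<le> wbar_p p V E"
    using U assms(1) \<open>0 < p\<close> density by (intro wbar_p_uniform_ge) auto
  have "1 \<le> D powr (1 - \<epsilon>)"
    using assms(2,5) by (simp add: ge_one_powr_ge_zero)
  then have "p \<le> wbar_p p V E"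
    using \<open>p \<le> 1\<close> Dq wbar by linarith
  moreover have "Delta_p 1 p V E \<le> c * wbar_p p V E"
  proof -
    have "Delta_p 1 p V E \<le> c * D * p ^ k"
      using Delta_p_uniform_le[OF U] Delta1 \<open>0 < p\<close>
      by (meson less_imp_le mult_right_mono order_trans zero_le_power)
    also have "\<dots> \<le> c * wbar_p p V E"
      using wbar assms(3) by (simp add: mult.assoc)
    finally show ?thesis .
  qed
  moreover have "Delta_p 2 p V E \<le> c * wbar_p p V E * p ^ k"
  proof -
    have "Delta_p 2 p V E \<le> c * D powr (1 - \<epsilon>) * p ^ k"
      using Delta_p_uniform_le[OF U] Delta2 \<open>0 < p\<close>
      by (meson less_imp_le mult_right_mono order_trans zero_le_power)
    also have "\<dots> \<le> c * wbar_p p V E * p ^ k"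
      using Dq wbar assms(3) \<open>0 < p\<close> by (intro mult_right_mono mult_left_mono) auto
    finally show ?thesis .
  qed
  ultimately show ?thesis
    using bounded_if_uniform[OF U] by (simp add: lambda_p_structure_def p_def)
qed

end
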